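(* If $\rho\equiv\sum_{n=1}^N \frac{r_n}{C_n}\le 1$, then every packet $p^{g,j}$ of the aggregate flow has delay $d^{g,j}-a^{g,j}\le \sum_{n=1}^N\frac{\sigma_n}{C_n}$. Moreover, the bound is tight: there exist arrival patterns satisfying the constraints (e.g. each class $m$ releasing a burst of total size $\sigma_m$ at time $0$) for which some packet has delay exactly $\sum_n \sigma_n/C_n$.
   Context: A multiclass FIFO system serves packets from $N$ classes. Class $n$ has constant service rate $C_n>0$. All packets, indexed in order of arrival (ties broken arbitrarily) as $p^{g,1},p^{g,2},\dots$ with arrival times $0\le a^{g,1}\le a^{g,2}\le\cdots$ and lengths $l^{g,j}>0$, depart at $d^{g,j}=\max\{a^{g,j},d^{g,j-1}\}+l^{g,j}/C_{c(j)}$, $d^{g,0}=0$, where $c(j)$ is the class of $p^{g,j}$ (work-conserving FIFO, initially empty, infinite buffer). $A_n(s,t)$ is the total length of class-$n$ packets arriving in $[s,t]$. Each class satisfies the leaky-bucket constraint $A_n(s,t)\le r_n(t-s)+\sigma_n$ for all $0\le s\le t$, with constants $r_n,\sigma_n\ge 0$. *)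

theory Defs
  imports Main "HOL-Library.Extended_Real"
begin

text \<open>Packets are indexed 1..K in order of arrival; a j = arrival time, l j = length,
  c j = class (in {1..N}); C n = service rate of class n.\<close>

fun depart :: "(nat \<Rightarrow> real) \<Rightarrow> (nat \<Rightarrow> real) \<Rightarrow> (nat \<Rightarrow> nat) \<Rightarrow> (nat \<Rightarrow> real) \<Rightarrow> nat \<Rightarrow> real" where
  "depart a l c C 0 = 0"
| "depart a l c C (Suc j) = max (a (Suc j)) (depart a l c C j) + l (Suc j) / C (c (Suc j))"

definition arrivals :: "nat \<Rightarrow> (nat \<Rightarrow> real) \<Rightarrow> (nat \<Rightarrow> real) \<Rightarrow> (nat \<Rightarrow> nat) \<Rightarrow> nat \<Rightarrow> real \<Rightarrow> real \<Rightarrow> real" where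
  "arrivals K a l c n s t = (\<Sum>j\<in>{j\<in>{1..K}. c j = n \<and> s \<le> a j \<and> a j \<le> t}. l j)"

definition admissible :: "nat \<Rightarrow> (nat \<Rightarrow> real) \<Rightarrow> (nat \<Rightarrow> real) \<Rightarrow> nat \<Rightarrow> (nat \<Rightarrow> real) \<Rightarrow> (nat \<Rightarrow> real) \<Rightarrow> (nat \<Rightarrow> nat) \<Rightarrow> bool" where
  "admissible N r \<sigma> K a l c \<longleftrightarrow>
     (\<forall>j\<in>{1..K}. c j \<in> {1..N} \<and> l j > 0 \<and> 0 \<le> a j) \<and>
     (\<forall>j\<in>{1..K}. \<forall>i\<in>{1..K}. j \<le> i \<longrightarrow> a j \<le> a i) \<and>
     (\<forall>n\<in>{1..N}. \<forall>s t. 0 \<le> s \<longrightarrow> s \<le> t \<longrightarrow> arrivals K a l c n s t \<le> r n * (t - s) + \<sigma> n)"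

end

theory Submission
  imports Defs
begin

text \<open>The departure time of packet j is the arrival time of the first packet i of its busy period
  plus the service times of packets i..j. All of them arrived in [a i, a j], so by the leaky-bucket
  constraints class n contributes at most (r n (a j - a i) + \<sigma> n) / C n of service time; summing
  over the classes and using \<rho> \<le> 1, the delay d j - a j is at most \<Sum>n. \<sigma> n / C n.
  Equality is attained when every class with \<sigma> n > 0 sends a single packet of length \<sigma> n at
  time 0: the last of these packets leaves after exactly \<Sum>n. \<sigma> n / C n.\<close>

lemma depart_eq_busy_period_start:
  assumes "a 1 \<ge> 0" and "j \<ge> 1"
  shows "\<exists>i\<in>{1..j}. depart a l c C j = a i + (\<Sum>k=i..j. l k / C (c k))"
  using \<open>j \<ge> 1\<close>
proof (induction j)
  case 0
  then show ?case by simp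
next
  case (Suc j)
  show ?case
  proof (cases "j = 0 \<or> a (Suc j) \<ge> depart a l c C j")
    case True
    then show ?thesis using \<open>a 1 \<ge> 0\<close> by (intro bexI[of _ "Suc j"]) auto
  next
    case False
    then obtain i where i: "i \<in> {1..j}" "depart a l c C j = a i + (\<Sum>k=i..j. l k / C (c k))"
      using Suc.IH by auto
    have "depart a l c C (Suc j) = a i + (\<Sum>k=i..Suc j. l k / C (c k))"
      using False i by (simp add: sum.cl_ivl_Suc add.assoc)
    then show ?thesis using i by (intro bexI[of _ i]) auto
  qed
qed

lemma class_work_le_arrivals:
  assumes adm: "admissible N r \<sigma> K a l c" and "1 \<le> i" "j \<le> K"
  shows "(\<Sum>k | k \<in> {i..j} \<and> c k = n. l k) \<le> arrivals K a l c n (a i) (a j)"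
  unfolding arrivals_def
proof (rule sum_mono2)
  show "{k. k \<in> {i..j} \<and> c k = n} \<subseteq> {k\<in>{1..K}. c k = n \<and> a i \<le> a k \<and> a k \<le> a j}"
    using adm assms(2,3) unfolding admissible_def by auto
  show "0 \<le> l k" if "k \<in> {k\<in>{1..K}. c k = n \<and> a i \<le> a k \<and> a k \<le> a j} - {k. k \<in> {i..j} \<and> c k = n}" for k
    using adm that unfolding admissible_def by (auto intro: less_imp_le)
qed simp

lemma service_time_le_leaky_bucket_bound:
  assumes adm: "admissible N r \<sigma> K a l c"
    and C_pos: "\<forall>n\<in>{1..N}. C n > 0"
    and "1 \<le> i" "i \<le> j" "j \<le> K"
  shows "(\<Sum>k=i..j. l k / C (c k)) \<le> (a j - a i) * (\<Sum>n=1..N. r n / C n) + (\<Sum>n=1..N. \<sigma> n / C n)"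
proof -
  have classes: "\<forall>k\<in>{i..j}. c k \<in> {1..N}" and ai: "0 \<le> a i" "a i \<le> a j"
    and bucket: "\<forall>n\<in>{1..N}. arrivals K a l c n (a i) (a j) \<le> r n * (a j - a i) + \<sigma> n"
    using adm assms(3-5) unfolding admissible_def by auto
  have "(\<Sum>k=i..j. l k / C (c k)) = (\<Sum>n=1..N. \<Sum>k | k \<in> {i..j} \<and> c k = n. l k / C (c k))"
    using classes by (intro sum.group[symmetric]) auto
  also have "\<dots> = (\<Sum>n=1..N. (\<Sum>k | k \<in> {i..j} \<and> c k = n. l k) / C n)"
    by (simp add: sum_divide_distrib)
  also have "\<dots> \<le> (\<Sum>n=1..N. arrivals K a l c n (a i) (a j) / C n)"
    using class_work_le_arrivals[OF adm \<open>1 \<le> i\<close> \<open>j \<le> K\<close>] C_pos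
    by (intro sum_mono divide_right_mono) (auto intro: less_imp_le)
  also have "\<dots> \<le> (\<Sum>n=1..N. (r n * (a j - a i) + \<sigma> n) / C n)"
    using bucket C_pos by (intro sum_mono divide_right_mono) (auto intro: less_imp_le)
  also have "\<dots> = (a j - a i) * (\<Sum>n=1..N. r n / C n) + (\<Sum>n=1..N. \<sigma> n / C n)"
    by (simp add: add_divide_distrib sum.distrib sum_distrib_left mult.commute)
  finally show ?thesis .
qed

lemma admissible_delay_le:
  assumes adm: "admissible N r \<sigma> K a l c"
    and C_pos: "\<forall>n\<in>{1..N}. C n > 0"
    and rho: "(\<Sum>n=1..N. r n / C n) \<le> 1"
    and j: "j \<in> {1..K}"
  shows "depart a l c C j - a j \<le> (\<Sum>n=1..N. \<sigma> n / C n)"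
proof -
  have "a 1 \<ge> 0" using adm j unfolding admissible_def by auto
  then obtain i where i: "i \<in> {1..j}" and dep: "depart a l c C j = a i + (\<Sum>k=i..j. l k / C (c k))"
    using depart_eq_busy_period_start j by fastforce
  have "a i \<le> a j" using adm i j unfolding admissible_def by auto
  have "(\<Sum>k=i..j. l k / C (c k)) \<le> (a j - a i) * (\<Sum>n=1..N. r n / C n) + (\<Sum>n=1..N. \<sigma> n / C n)"
    using service_time_le_leaky_bucket_bound[OF adm C_pos] i j by auto
  also have "\<dots> \<le> (a j - a i) + (\<Sum>n=1..N. \<sigma> n / C n)"
    using rho \<open>a i \<le> a j\<close> by (simp add: mult_left_le)
  finally show ?thesis using dep by simp
qed

lemma depart_simultaneous_arrivals:
  assumes "\<forall>k\<in>{1..j}. l k / C (c k) \<ge> 0"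
  shows "depart (\<lambda>_. 0) l c C j = (\<Sum>k=1..j. l k / C (c k))"
  using assms
proof (induction j)
  case 0
  then show ?case by simp
next
  case (Suc j)
  then have "depart (\<lambda>_. 0) l c C j = (\<Sum>k=1..j. l k / C (c k))" "(\<Sum>k=1..j. l k / C (c k)) \<ge> 0"
    by (auto intro: sum_nonneg)
  then show ?case by (simp add: sum.cl_ivl_Suc)
qed

lemma admissible_one_burst_per_class:
  assumes h: "inj_on h {1..K}" "h ` {1..K} \<subseteq> {n\<in>{1..N}. \<sigma> n > 0}"
    and r_nonneg: "\<forall>n\<in>{1..N}. r n \<ge> 0"
    and sigma_nonneg: "\<forall>n\<in>{1..N}. \<sigma> n \<ge> 0"
  shows "admissible N r \<sigma> K (\<lambda>_. 0) (\<lambda>k. \<sigma> (h k)) h"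
  unfolding admissible_def
proof (intro conjI ballI allI impI)
  fix n and s t :: real
  assume n: "n \<in> {1..N}" and st: "0 \<le> s" "s \<le> t"
  let ?T = "{k\<in>{1..K}. h k = n \<and> s \<le> 0 \<and> 0 \<le> t}"
  have "arrivals K (\<lambda>_. 0) (\<lambda>k. \<sigma> (h k)) h n s t \<le> \<sigma> n"
  proof (cases "?T = {}")
    case True
    then show ?thesis using sigma_nonneg n unfolding arrivals_def by (simp only: sum.empty)
  next
    case False
    then obtain k where k: "k \<in> ?T" by blast
    then have "?T = {k}" using h(1) by (auto dest: inj_onD)
    moreover have "h k = n" using k by simp
    ultimately show ?thesis unfolding arrivals_def by simp
  qed
  also have "\<dots> \<le> r n * (t - s) + \<sigma> n"
    using r_nonneg n st by simp
  finally show "arrivals K (\<lambda>_. 0) (\<lambda>k. \<sigma> (h k)) h n s t \<le> r n * (t - s) + \<sigma> n" .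
qed (use h(2) in force)+

lemma burst_delay_eq:
  assumes C_pos: "\<forall>n\<in>{1..N}. C n > 0"
    and sigma_nonneg: "\<forall>n\<in>{1..N}. \<sigma> n \<ge> 0"
    and h: "bij_betw h {1..K} {n\<in>{1..N}. \<sigma> n > 0}"
  shows "depart (\<lambda>_. 0) (\<lambda>k. \<sigma> (h k)) h C K = (\<Sum>n=1..N. \<sigma> n / C n)"
proof -
  have "h k \<in> {n\<in>{1..N}. \<sigma> n > 0}" if "k \<in> {1..K}" for k
    using h that by (auto simp: bij_betw_def)
  then have "depart (\<lambda>_. 0) (\<lambda>k. \<sigma> (h k)) h C K = (\<Sum>k=1..K. \<sigma> (h k) / C (h k))"
    using C_pos by (intro depart_simultaneous_arrivals) (fastforce intro: less_imp_le)
  also have "\<dots> = (\<Sum>n | n \<in> {1..N} \<and> \<sigma> n > 0. \<sigma> n / C n)"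
    by (rule sum.reindex_bij_betw[OF h])
  also have "\<dots> = (\<Sum>n=1..N. \<sigma> n / C n)"
    using sigma_nonneg by (intro sum.mono_neutral_left) auto
  finally show ?thesis .
qed

theorem theorem1:
  fixes N :: nat and C r \<sigma> :: "nat \<Rightarrow> real"
  assumes C_pos: "\<forall>n\<in>{1..N}. C n > 0"
    and r_nonneg: "\<forall>n\<in>{1..N}. r n \<ge> 0"
    and sigma_nonneg: "\<forall>n\<in>{1..N}. \<sigma> n \<ge> 0"
    and rho: "(\<Sum>n=1..N. r n / C n) \<le> 1"
  shows "(\<forall>K a l c. admissible N r \<sigma> K a l c \<longrightarrow>
            (\<forall>j\<in>{1..K}. depart a l c C j - a j \<le> (\<Sum>n=1..N. \<sigma> n / C n)))
       \<and> ((\<exists>n\<in>{1..N}. \<sigma> n > 0) \<longrightarrow>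
            (\<exists>K a l c. admissible N r \<sigma> K a l c \<and>
               (\<exists>j\<in>{1..K}. depart a l c C j - a j = (\<Sum>n=1..N. \<sigma> n / C n))))"
proof (intro conjI allI impI ballI)
  show "depart a l c C j - a j \<le> (\<Sum>n=1..N. \<sigma> n / C n)"
    if "admissible N r \<sigma> K a l c" "j \<in> {1..K}" for K a l c j
    using admissible_delay_le[OF that(1) C_pos rho that(2)] .
next
  assume "\<exists>n\<in>{1..N}. \<sigma> n > 0"
  define S where "S = {n\<in>{1..N}. \<sigma> n > 0}"
  obtain h where h: "bij_betw h {1..card S} S"
    using ex_bij_betw_nat_finite_1[of S] unfolding S_def by auto
  have "card S \<ge> 1"
    using \<open>\<exists>n\<in>{1..N}. \<sigma> n > 0\<close> by (auto simp: S_def Suc_le_eq card_gt_0_iff)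
  moreover have "admissible N r \<sigma> (card S) (\<lambda>_. 0) (\<lambda>k. \<sigma> (h k)) h"
    using h r_nonneg sigma_nonneg unfolding S_def
    by (intro admissible_one_burst_per_class) (auto simp: bij_betw_def)
  moreover have "depart (\<lambda>_. 0) (\<lambda>k. \<sigma> (h k)) h C (card S) - 0 = (\<Sum>n=1..N. \<sigma> n / C n)"
    using burst_delay_eq[OF C_pos sigma_nonneg] h unfolding S_def by simp
  ultimately show "\<exists>K a l c. admissible N r \<sigma> K a l c \<and>
               (\<exists>j\<in>{1..K}. depart a l c C j - a j = (\<Sum>n=1..N. \<sigma> n / C n))"
    by fastforce
qed

end
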